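(* Let $v\ge w\ge 3$ and let $(\mathcal{X},\mathcal{B})$ be a $2$-IPPS$(w,v)$. If there exist two distinct blocks $A,B\in\mathcal{B}$ with $|A\cap B|=w-1$, then $|\mathcal{B}|\le v-w+1$.
   Context: A $(w,v)$ set system is a pair $(\mathcal{X},\mathcal{B})$ with $|\mathcal{X}|=v$ and $\mathcal{B}$ a family of $w$-element subsets (blocks) of $\mathcal{X}$. For a $w$-subset $T\subseteq\mathcal{X}$ let $P_t(T)=\{\mathcal{P}\subseteq\mathcal{B}: |\mathcal{P}|\le t,\ T\subseteq\bigcup_{B\in\mathcal{P}}B\}$. The set system is a $t$-IPPS$(w,v)$ if for every $w$-subset $T\subseteq\mathcal{X}$, either $P_t(T)=\emptyset$ or $\bigcap_{\mathcal{P}\in P_t(T)}\mathcal{P}\neq\emptyset$. *)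

theory Defs
  imports Main
begin

definition set_system :: "nat \<Rightarrow> nat \<Rightarrow> 'a set \<Rightarrow> 'a set set \<Rightarrow> bool" where
  "set_system w v X B \<longleftrightarrow> finite X \<and> card X = v \<and>
     (\<forall>b\<in>B. b \<subseteq> X \<and> card b = w)"

definition Pt :: "nat \<Rightarrow> 'a set set \<Rightarrow> 'a set \<Rightarrow> 'a set set set" where
  "Pt t B T = {P. P \<subseteq> B \<and> card P \<le> t \<and> T \<subseteq> \<Union>P}"

definition IPPS :: "nat \<Rightarrow> nat \<Rightarrow> nat \<Rightarrow> 'a set \<Rightarrow> 'a set set \<Rightarrow> bool" where
  "IPPS t w v X B \<longleftrightarrow> set_system w v X B \<and>
     (\<forall>T. T \<subseteq> X \<and> card T = w \<longrightarrow> Pt t B T = {} \<or> \<Inter>(Pt t B T) \<noteq> {})"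

end

theory Submission
  imports Defs
begin

text \<open>Let \<open>U = A\<^sub>1 \<union> A\<^sub>2\<close>, a set of \<open>w + 1\<close> points. A further block \<open>D \<subseteq> U\<close> would be
  covered both by \<open>{D}\<close> and by \<open>{A\<^sub>1, A\<^sub>2}\<close>; two further blocks \<open>D \<noteq> E\<close> sharing a point
  \<open>y \<notin> A\<^sub>1 \<inter> A\<^sub>2\<close> would give the \<open>w\<close>-set \<open>(A\<^sub>1 \<inter> A\<^sub>2) \<union> {y}\<close> the disjoint covers
  \<open>{A\<^sub>1, D}\<close> and \<open>{A\<^sub>2, E}\<close>. Both contradict the IPP property, so the sets \<open>D - U\<close> of the
  remaining blocks are nonempty and pairwise disjoint in \<open>X - U\<close>, whence
  \<open>card B - 2 \<le> v - w - 1\<close>.\<close>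

lemma IPPS_no_disjoint_covers:
  assumes "IPPS t w v X B" "T \<subseteq> X" "card T = w"
    and "P\<^sub>1 \<in> Pt t B T" "P\<^sub>2 \<in> Pt t B T" "P\<^sub>1 \<inter> P\<^sub>2 = {}"
  shows False
proof -
  have "\<Inter>(Pt t B T) \<subseteq> P\<^sub>1 \<inter> P\<^sub>2"
    using assms(4,5) by blast
  then show False
    using assms unfolding IPPS_def by auto
qed

lemma pair_in_Pt_2:
  assumes "C \<in> B" "D \<in> B" "T \<subseteq> C \<union> D"
  shows "{C, D} \<in> Pt 2 B T"
  using assms unfolding Pt_def by (auto simp: card_insert_if)

lemma IPPS_2_block_not_subset_union:
  assumes "IPPS 2 w v X B" "A\<^sub>1 \<in> B" "A\<^sub>2 \<in> B" "D \<in> B" "D \<notin> {A\<^sub>1, A\<^sub>2}"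
  shows "\<not> D \<subseteq> A\<^sub>1 \<union> A\<^sub>2"
proof
  assume "D \<subseteq> A\<^sub>1 \<union> A\<^sub>2"
  with assms(2,3) have "{A\<^sub>1, A\<^sub>2} \<in> Pt 2 B D"
    by (rule pair_in_Pt_2)
  moreover have "{D} \<in> Pt 2 B D"
    using assms(4) unfolding Pt_def by auto
  moreover have "D \<subseteq> X" "card D = w"
    using assms(1,4) unfolding IPPS_def set_system_def by auto
  ultimately show False
    using IPPS_no_disjoint_covers[OF assms(1)] assms(5) by blast
qed

lemma IPPS_2_blocks_meet_inside_inter:
  assumes IPPS: "IPPS 2 w v X B"
    and blocks: "A\<^sub>1 \<in> B" "A\<^sub>2 \<in> B" "D \<in> B" "E \<in> B"
    and distinct: "A\<^sub>1 \<noteq> A\<^sub>2" "D \<noteq> E" "D \<noteq> A\<^sub>2" "E \<noteq> A\<^sub>1"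
    and inter: "card (A\<^sub>1 \<inter> A\<^sub>2) = w - 1"
  shows "D \<inter> E \<subseteq> A\<^sub>1 \<inter> A\<^sub>2"
proof
  fix y assume y: "y \<in> D \<inter> E"
  show "y \<in> A\<^sub>1 \<inter> A\<^sub>2"
  proof (rule ccontr)
    assume y_out: "y \<notin> A\<^sub>1 \<inter> A\<^sub>2"
    have fin: "finite X" and sub: "\<And>b. b \<in> B \<Longrightarrow> b \<subseteq> X \<and> card b = w"
      using IPPS unfolding IPPS_def set_system_def by auto
    have "finite A\<^sub>1" "finite A\<^sub>2"
      using sub blocks(1,2) fin finite_subset by blast+
    have "w \<noteq> 0"
    proof
      assume "w = 0"
      then have "A\<^sub>1 = {}" "A\<^sub>2 = {}"
        using sub[OF blocks(1)] sub[OF blocks(2)] \<open>finite A\<^sub>1\<close> \<open>finite A\<^sub>2\<close> by auto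
      then show False using distinct(1) by simp
    qed
    define T where "T = insert y (A\<^sub>1 \<inter> A\<^sub>2)"
    have "card T = w"
      using y_out inter \<open>w \<noteq> 0\<close> \<open>finite A\<^sub>1\<close> unfolding T_def by simp
    moreover have "T \<subseteq> X"
      using y sub blocks unfolding T_def by blast
    moreover have "{A\<^sub>1, D} \<in> Pt 2 B T" "{A\<^sub>2, E} \<in> Pt 2 B T"
      using blocks y unfolding T_def by (auto intro!: pair_in_Pt_2)
    moreover have "{A\<^sub>1, D} \<inter> {A\<^sub>2, E} = {}"
      using distinct by auto
    ultimately show False
      using IPPS_no_disjoint_covers[OF IPPS] by blast
  qed
qed

lemma card_le_of_disjoint_nonempty_subsets:
  fixes S :: "'b \<Rightarrow> 'a set"
  assumes "finite Y"
    and "\<And>D. D \<in> F \<Longrightarrow> S D \<noteq> {} \<and> S D \<subseteq> Y"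
    and "\<And>D E. D \<in> F \<Longrightarrow> E \<in> F \<Longrightarrow> D \<noteq> E \<Longrightarrow> S D \<inter> S E = {}"
  shows "card F \<le> card Y"
proof -
  define pick where "pick D = (SOME y. y \<in> S D)" for D
  have pick: "pick D \<in> S D" if "D \<in> F" for D
    unfolding pick_def using assms(2)[OF that] by (metis ex_in_conv someI_ex)
  have "inj_on pick F"
  proof (rule inj_onI)
    fix D E assume "D \<in> F" "E \<in> F" "pick D = pick E"
    then have "pick D \<in> S D \<inter> S E"
      using pick[of D] pick[of E] by simp
    then show "D = E"
      using assms(3)[OF \<open>D \<in> F\<close> \<open>E \<in> F\<close>] by auto
  qed
  moreover have "pick ` F \<subseteq> Y"
    using pick assms(2) by blast
  ultimately show ?thesis
    using card_inj_on_le assms(1) by blast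
qed

theorem proposition2:
  fixes X :: "'a set" and B :: "'a set set" and v w :: nat
  assumes "v \<ge> w" and "w \<ge> 3"
    and "IPPS 2 w v X B"
    and "A1 \<in> B" and "A2 \<in> B" and "A1 \<noteq> A2" and "card (A1 \<inter> A2) = w - 1"
  shows "card B \<le> v - w + 1"
proof -
  define U where "U = A1 \<union> A2"
  have fin: "finite X" and "card X = v" and sub: "\<And>b. b \<in> B \<Longrightarrow> b \<subseteq> X \<and> card b = w"
    using assms(3) unfolding IPPS_def set_system_def by auto
  have "U \<subseteq> X" "finite A1" "finite A2"
    using sub assms(4,5) fin finite_subset unfolding U_def by blast+
  then have "card U = w + 1"
    using card_Un_Int[of A1 A2] sub assms(2,4,5,7) unfolding U_def by auto
  have "card (B - {A1, A2}) \<le> card (X - U)"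
  proof (rule card_le_of_disjoint_nonempty_subsets[where S = "\<lambda>D. D - U"])
    show "finite (X - U)" using fin by simp
    show "D - U \<noteq> {} \<and> D - U \<subseteq> X - U" if "D \<in> B - {A1, A2}" for D
      using IPPS_2_block_not_subset_union[OF assms(3,4,5)] sub that unfolding U_def by blast
    show "(D - U) \<inter> (E - U) = {}" if "D \<in> B - {A1, A2}" "E \<in> B - {A1, A2}" "D \<noteq> E" for D E
      using IPPS_2_blocks_meet_inside_inter[OF assms(3,4,5) _ _ assms(6) _ _ _ assms(7)] that
      unfolding U_def by blast
  qed
  moreover have "card (X - U) = v - (w + 1)"
    using card_Diff_subset[OF finite_subset] \<open>U \<subseteq> X\<close> fin \<open>card X = v\<close> \<open>card U = w + 1\<close> by metis
  moreover have "finite B"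
    using fin sub by (meson Pow_iff finite_Pow_iff finite_subset subsetI)
  then have "card (B - {A1, A2}) = card B - 2"
    using assms(4,5,6) by (simp add: card_Diff_subset)
  moreover have "w + 1 \<le> v"
    using card_mono[OF fin \<open>U \<subseteq> X\<close>] \<open>card X = v\<close> \<open>card U = w + 1\<close> by simp
  ultimately show ?thesis by linarith
qed

end
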